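(* For every integer $n\ge1$ and every $u\in V$, $\Pr(E_{5u})<\dfrac{36\,\zeta(3)}{\ln^{2}(n+1)}$, where $\zeta(3)=\sum_{i\ge1} i^{-3}$.
   Context: For an integer $n\ge1$, the $n$-octahedral graph $G'_n=(V,E')$ is the undirected graph with vertex set $V=\{u\in\mathbb{Z}^3:|u_1|+|u_2|+|u_3|=n\}$ and edge set $E'=\{\{v,w\}\subset V: v\neq w,\ |v_i-w_i|\le 1 \text{ for all } i=1,2,3\}$. For $u,v\in V$, $d_{uv}$ denotes the shortest-path distance in $G'_n$, and $Z_u=\left(\sum_{w\in V\setminus\{u\}} d_{uw}^{-2}\right)^{-1}$. The OSW random graph $G_n=(V,E)$ is the directed graph in which, for every $\{u,v\}\in E'$, both $(u,v),(v,u)\in E$, and in addition each vertex $u\in V$, independently of the others, chooses one vertex $v\in V\setminus\{u\}$ with probability $Z_u d_{uv}^{-2}$ and the long-range edge $(u,v)$ is added; $C_{uv}$ denotes the event that $u$ chooses $v$. For an ordered pair $(x,y)$ of distinct vertices, say $(x,y)$ is of type $s$ if $\{x,y\}\in E'$, and of type $w$ if $d_{xy}\ge2$ and $C_{xy}$ occurs. A C3 rooted at $u$ of type $(t_1,t_2,t_3)\in\{s,w\}^3$ is a triple $(u,a,b)$ of pairwise distinct vertices such that $(u,a)$ is of type $t_1$, $(a,b)$ is of type $t_2$ and $(b,u)$ is of type $t_3$. $E_{5u}$ is the event that there exists a C3 rooted at $u$ of type $(w,s,w)$. *)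

theory Defs
  imports "HOL-Probability.Probability"
begin

type_synonym vtx = "int \<times> int \<times> int"

definition octV :: "nat \<Rightarrow> vtx set" where
  "octV n = {(x, y, z). \<bar>x\<bar> + \<bar>y\<bar> + \<bar>z\<bar> = int n}"

definition octE :: "nat \<Rightarrow> (vtx \<times> vtx) set" where
  "octE n = {((x1, y1, z1), (x2, y2, z2)).
      (x1, y1, z1) \<in> octV n \<and> (x2, y2, z2) \<in> octV n \<and> (x1, y1, z1) \<noteq> (x2, y2, z2) \<and>
      \<bar>x1 - x2\<bar> \<le> 1 \<and> \<bar>y1 - y2\<bar> \<le> 1 \<and> \<bar>z1 - z2\<bar> \<le> 1}"

definition octd :: "nat \<Rightarrow> vtx \<Rightarrow> vtx \<Rightarrow> nat" where
  "octd n u v = (LEAST k. (u, v) \<in> octE n ^^ k)"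

definition octZ :: "nat \<Rightarrow> vtx \<Rightarrow> real" where
  "octZ n u = inverse (\<Sum>w\<in>octV n - {u}. 1 / (real (octd n u w))\<^sup>2)"

definition choice_pmf :: "nat \<Rightarrow> vtx \<Rightarrow> vtx pmf" where
  "choice_pmf n u = embed_pmf (\<lambda>v. if v \<in> octV n - {u}
       then octZ n u / (real (octd n u v))\<^sup>2 else 0)"

definition choices_pmf :: "nat \<Rightarrow> (vtx \<Rightarrow> vtx) pmf" where
  "choices_pmf n = Pi_pmf (octV n) (0, 0, 0) (choice_pmf n)"

definition E5 :: "nat \<Rightarrow> vtx \<Rightarrow> (vtx \<Rightarrow> vtx) set" where
  "E5 n u = {f. \<exists>a b. u \<noteq> a \<and> a \<noteq> b \<and> b \<noteq> u \<and>
      octd n u a \<ge> 2 \<and> f u = a \<and>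
      {a, b} \<in> {{v, w} | v w. (v, w) \<in> octE n} \<and>
      octd n b u \<ge> 2 \<and> f b = u}"

end

theory Submission
  imports Defs "HOL-Analysis.Harmonic_Numbers"
begin

text \<open>A union bound over the middle edge {a, b} of the triangle reduces E5 to pairs of independent
  choices u to a and b to u, each of probability Z d^(-2). Two estimates drive the bound. First,
  1/Z_u > ln (n + 1): if x \<ge> n/3 is the largest absolute coordinate of u, then for each k \<le> x the
  face of u contains k + 1 vertices within graph distance k, so 1/Z_u \<ge> H_x + \<Sum>_{k \<le> x} k^(-2).
  Second, graph distance dominates the Chebyshev distance \<rho>, so the union bound is at most
  ln (n + 1)^(-2) \<Sum> \<rho>_a^(-2) \<rho>_b^(-2) over the edges {a, b} far from u. By AM-GM and the symmetry
  of the edge set this is at most \<Sum> \<rho>_a^(-4); every vertex has at most 6 neighbours and at most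
  12 (2m + 1) \<le> 30 m vertices have \<rho> = m, which leaves 180 \<Sum>_{m \<ge> 2} m^(-3) < 36 \<zeta>(3), as
  \<Sum>_{m \<ge> 2} m^(-3) < 1/4.\<close>

section \<open>Chebyshev distance\<close>

definition cheb_dist :: "vtx \<Rightarrow> vtx \<Rightarrow> nat" where
  "cheb_dist v w = (case (v, w) of ((x1, y1, z1), (x2, y2, z2)) \<Rightarrow>
      nat (max \<bar>x1 - x2\<bar> (max \<bar>y1 - y2\<bar> \<bar>z1 - z2\<bar>)))"

lemma int_cheb_dist [simp]:
  "int (cheb_dist (x1, y1, z1) (x2, y2, z2)) = max \<bar>x1 - x2\<bar> (max \<bar>y1 - y2\<bar> \<bar>z1 - z2\<bar>)"
  by (simp add: cheb_dist_def le_max_iff_disj)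

lemma cheb_dist_le_iff:
  "cheb_dist (x1, y1, z1) (x2, y2, z2) \<le> m \<longleftrightarrow> \<bar>x1 - x2\<bar> \<le> int m \<and> \<bar>y1 - y2\<bar> \<le> int m \<and> \<bar>z1 - z2\<bar> \<le> int m"
  by (simp add: cheb_dist_def nat_le_iff)

lemma cheb_dist_commute: "cheb_dist v w = cheb_dist w v"
  by (cases v; cases w) (simp add: cheb_dist_def abs_minus_commute max.commute max.left_commute)

lemma cheb_dist_triangle: "cheb_dist u w \<le> cheb_dist u v + cheb_dist v w"
proof -
  obtain x1 y1 z1 x2 y2 z2 x3 y3 z3 where "u = (x1, y1, z1)" "v = (x2, y2, z2)" "w = (x3, y3, z3)"
    by (metis prod.exhaust)
  moreover have "int (cheb_dist (x1, y1, z1) (x3, y3, z3))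
      \<le> int (cheb_dist (x1, y1, z1) (x2, y2, z2)) + int (cheb_dist (x2, y2, z2) (x3, y3, z3))"
    unfolding int_cheb_dist max.bounded_iff by (smt (verit) max.cobounded1 max.cobounded2)
  ultimately show ?thesis by (simp only: of_nat_add[symmetric] of_nat_le_iff)
qed

lemma cheb_dist_eq_0_iff [simp]: "cheb_dist v w = 0 \<longleftrightarrow> v = w"
  by (cases v; cases w) (auto simp: cheb_dist_def max_def)

lemma cheb_dist_self [simp]: "cheb_dist v v = 0"
  by simp

lemma finite_octV: "finite (octV n)"
proof (rule finite_subset)
  show "octV n \<subseteq> {-int n..int n} \<times> {-int n..int n} \<times> {-int n..int n}"
    by (auto simp: octV_def)
qed simp

lemma octE_imp_octV: "(v, w) \<in> octE n \<Longrightarrow> v \<in> octV n \<and> w \<in> octV n \<and> v \<noteq> w"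
  by (cases v; cases w) (auto simp: octE_def)

lemma octE_sym: "(v, w) \<in> octE n \<Longrightarrow> (w, v) \<in> octE n"
  by (cases v; cases w) (auto simp: octE_def abs_minus_commute)

lemma finite_octE: "finite (octE n)"
  by (rule finite_subset[of _ "octV n \<times> octV n"]) (auto dest: octE_imp_octV simp: finite_octV)

lemma octE_iff_cheb_dist:
  "(v, w) \<in> octE n \<longleftrightarrow> v \<in> octV n \<and> w \<in> octV n \<and> v \<noteq> w \<and> cheb_dist v w \<le> 1"
  by (cases v; cases w) (auto simp: octE_def cheb_dist_def)

lemma cheb_dist_le_relpow: "(v, w) \<in> octE n ^^ k \<Longrightarrow> cheb_dist v w \<le> k"
proof (induction k arbitrary: w)
  case (Suc k)
  then obtain u where "(v, u) \<in> octE n ^^ k" "(u, w) \<in> octE n" by auto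
  moreover have "cheb_dist v w \<le> cheb_dist v u + cheb_dist u w"
    by (rule cheb_dist_triangle)
  ultimately show ?case using Suc.IH[of u] by (auto simp: octE_iff_cheb_dist)
qed simp

lemma cheb_dist_octV_le:
  assumes "v \<in> octV n" "w \<in> octV n" shows "cheb_dist v w \<le> 2 * n"
proof -
  obtain x1 y1 z1 x2 y2 z2 where "v = (x1, y1, z1)" "w = (x2, y2, z2)" by (metis prod.exhaust)
  moreover have "int (cheb_dist (x1, y1, z1) (x2, y2, z2)) \<le> 2 * int n"
    if "(x1, y1, z1) \<in> octV n" "(x2, y2, z2) \<in> octV n"
    using that unfolding int_cheb_dist max.bounded_iff by (auto simp: octV_def)
  ultimately have "int (cheb_dist v w) \<le> 2 * int n" using assms by blast
  then show ?thesis by linarith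
qed

section \<open>Coordinate rotation and connectivity\<close>

definition rot :: "vtx \<Rightarrow> vtx" where
  "rot v = (case v of (x, y, z) \<Rightarrow> (y, z, x))"

lemma rot_simp [simp]: "rot (x, y, z) = (y, z, x)"
  by (simp add: rot_def)

lemma rot_rot_rot [simp]: "rot (rot (rot v)) = v"
  by (cases v) simp

lemma inj_rot: "inj rot"
  by (metis injI rot_rot_rot)

lemma rot_in_octV_iff [simp]: "rot v \<in> octV n \<longleftrightarrow> v \<in> octV n"
  by (cases v) (auto simp: octV_def)

lemma cheb_dist_rot [simp]: "cheb_dist (rot v) (rot w) = cheb_dist v w"
  by (cases v; cases w) (simp add: cheb_dist_def max.commute max.left_commute)

lemma rot_in_octE_iff [simp]: "(rot v, rot w) \<in> octE n \<longleftrightarrow> (v, w) \<in> octE n"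
  by (simp add: octE_iff_cheb_dist inj_eq[OF inj_rot])

lemma relpow_map:
  assumes "\<And>v w. (v, w) \<in> R \<Longrightarrow> (f v, f w) \<in> R" and "(v, w) \<in> R ^^ k"
  shows "(f v, f w) \<in> R ^^ k"
  using assms(2)
proof (induction k arbitrary: w)
  case (Suc k)
  then obtain u where "(v, u) \<in> R ^^ k" "(u, w) \<in> R" by auto
  with Suc.IH assms(1) show ?case by auto
qed simp

lemma rot_in_relpow_iff: "(rot v, rot w) \<in> octE n ^^ k \<longleftrightarrow> (v, w) \<in> octE n ^^ k"
  by (metis relpow_map rot_in_octE_iff rot_rot_rot)

lemma octd_rot [simp]: "octd n (rot v) (rot w) = octd n v w"
  by (simp add: octd_def rot_in_relpow_iff)

lemma octE_step_towards_pole: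
  assumes "v \<in> octV n" "v \<noteq> (int n, 0, 0)"
  shows "\<exists>w. (v, w) \<in> octE n \<and> fst w = fst v + 1"
proof -
  obtain a b c where v: "v = (a, b, c)" by (metis prod.exhaust)
  have abc: "\<bar>a\<bar> + \<bar>b\<bar> + \<bar>c\<bar> = int n" using assms(1) v by (simp add: octV_def)
  have step: "\<exists>w. (v, w) \<in> octE n \<and> fst w = fst v + 1"
    if "(a + 1, b', c') \<in> octV n" "\<bar>b - b'\<bar> \<le> 1" "\<bar>c - c'\<bar> \<le> 1" for b' c'
    using that assms(1) by (intro exI[of _ "(a + 1, b', c')"]) (simp add: v octE_def)
  consider "a < 0" | "a \<ge> 0" "b \<noteq> 0" | "a \<ge> 0" "b = 0" "c \<noteq> 0"
    using assms(2) abc v by (cases "a < 0"; cases "b = 0"; cases "c = 0") auto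
  then show ?thesis
  proof cases
    case 1
    then show ?thesis using abc by (intro step[of "if b \<ge> 0 then b + 1 else b - 1" c]) (auto simp: octV_def)
  next
    case 2
    then show ?thesis using abc by (intro step[of "b - sgn b" c]) (auto simp: octV_def sgn_if)
  next
    case 3
    then show ?thesis using abc by (intro step[of b "c - sgn c"]) (auto simp: octV_def sgn_if)
  qed
qed

lemma rtrancl_octE_pole:
  "v \<in> octV n \<Longrightarrow> (v, (int n, 0, 0)) \<in> (octE n)\<^sup>*"
proof (induction "nat (int n - fst v)" arbitrary: v rule: less_induct)
  case less
  show ?case
  proof (cases "v = (int n, 0, 0)")
    case False
    then obtain w where w: "(v, w) \<in> octE n" "fst w = fst v + 1"
      using octE_step_towards_pole less.prems by blast
    have wV: "w \<in> octV n" using octE_imp_octV[OF w(1)] by blast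
    then have "fst w \<le> int n" by (cases w) (auto simp: octV_def)
    then have "(w, (int n, 0, 0)) \<in> (octE n)\<^sup>*"
      using less.hyps[OF _ wV] w(2) by simp
    with w(1) show ?thesis by (rule converse_rtrancl_into_rtrancl)
  qed simp
qed

lemma octV_connected:
  assumes "v \<in> octV n" "w \<in> octV n"
  shows "\<exists>k. (v, w) \<in> octE n ^^ k"
proof -
  have "(octE n)\<inverse> = octE n" using octE_sym by auto
  then have "((int n, 0, 0), w) \<in> (octE n)\<^sup>*"
    using rtrancl_octE_pole[OF assms(2)] by (metis rtrancl_converseI)
  then have "(v, w) \<in> (octE n)\<^sup>*"
    by (rule rtrancl_trans[OF rtrancl_octE_pole[OF assms(1)]])
  then show ?thesis by (simp add: rtrancl_power)
qed

lemma octd_le: "(v, w) \<in> octE n ^^ k \<Longrightarrow> octd n v w \<le> k"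
  unfolding octd_def by (rule Least_le)

lemma relpow_octd: "v \<in> octV n \<Longrightarrow> w \<in> octV n \<Longrightarrow> (v, w) \<in> octE n ^^ octd n v w"
  unfolding octd_def by (rule LeastI_ex) (rule octV_connected)

lemma cheb_dist_le_octd: "v \<in> octV n \<Longrightarrow> w \<in> octV n \<Longrightarrow> cheb_dist v w \<le> octd n v w"
  by (rule cheb_dist_le_relpow) (rule relpow_octd)

lemma octd_pos: "v \<in> octV n \<Longrightarrow> w \<in> octV n \<Longrightarrow> v \<noteq> w \<Longrightarrow> 0 < octd n v w"
  using cheb_dist_le_octd[of v n w] by (metis cheb_dist_eq_0_iff gr0I le_zero_eq)

section \<open>The normalising constant\<close>

lemma relpow_triangular_grid:
  assumes "\<And>k j. k < K \<Longrightarrow> j \<le> k \<Longrightarrow> (g k j, g (Suc k) j) \<in> R \<and> (g k j, g (Suc k) (Suc j)) \<in> R"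
  shows "k \<le> K \<Longrightarrow> j \<le> k \<Longrightarrow> (g 0 0, g k j) \<in> R ^^ k"
proof (induction k arbitrary: j)
  case (Suc k)
  show ?case
  proof (cases "j \<le> k")
    case True
    with Suc assms show ?thesis by (meson Suc_le_lessD less_imp_le_nat relpow_Suc_I)
  next
    case False
    with Suc.prems have "j = Suc k" by simp
    with Suc assms show ?thesis by (meson Suc_le_lessD less_imp_le_nat order_refl relpow_Suc_I)
  qed
qed simp

definition outward :: "int \<Rightarrow> int" where
  "outward t = (if t < 0 then -1 else 1)"

lemma abs_outward [simp]: "\<bar>outward t\<bar> = 1"
  by (simp add: outward_def)

lemma abs_add_outward: "0 \<le> m \<Longrightarrow> \<bar>t + outward t * m\<bar> = \<bar>t\<bar> + m"
  by (simp add: outward_def)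

lemma abs_diff_outward: "0 \<le> m \<Longrightarrow> m \<le> \<bar>t\<bar> \<Longrightarrow> \<bar>t - outward t * m\<bar> = \<bar>t\<bar> - m"
  by (simp add: outward_def)

text \<open>\<open>fan v k j\<close> is reached from \<open>v\<close> by moving \<open>k\<close> units of \<open>\<bar>x\<bar>\<close> to the other two
  coordinates, \<open>j\<close> of them to \<open>\<bar>y\<bar>\<close>, keeping the signs of \<open>v\<close>; all these vertices lie on one face.\<close>
definition fan :: "vtx \<Rightarrow> nat \<Rightarrow> nat \<Rightarrow> vtx" where
  "fan v k j = (case v of (x, y, z) \<Rightarrow>
      (x - outward x * int k, y + outward y * int j, z + outward z * (int k - int j)))"

lemma fan_in_octV:
  assumes "v \<in> octV n" "int k \<le> \<bar>fst v\<bar>" "j \<le> k"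
  shows "fan v k j \<in> octV n"
  using assms by (cases v) (simp add: fan_def octV_def abs_add_outward abs_diff_outward)

lemma fan_relpow:
  assumes "v \<in> octV n" "int k \<le> \<bar>fst v\<bar>" "j \<le> k"
  shows "(v, fan v k j) \<in> octE n ^^ k"
proof -
  have "(fan v 0 0, fan v k j) \<in> octE n ^^ k"
  proof (rule relpow_triangular_grid[where K = "nat \<bar>fst v\<bar>"])
    fix k j assume "k < nat \<bar>fst v\<bar>" "j \<le> k"
    then have "fan v k j \<in> octV n" "fan v (Suc k) j \<in> octV n" "fan v (Suc k) (Suc j) \<in> octV n"
      using assms(1) by (auto intro: fan_in_octV)
    moreover have "fan v k j \<noteq> fan v (Suc k) j'" for j'
      by (cases v) (simp add: fan_def outward_def)
    moreover have "cheb_dist (fan v k j) (fan v (Suc k) j) \<le> 1 \<and> cheb_dist (fan v k j) (fan v (Suc k) (Suc j)) \<le> 1"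
      by (cases v) (simp add: fan_def cheb_dist_le_iff algebra_simps)
    ultimately show "(fan v k j, fan v (Suc k) j) \<in> octE n \<and> (fan v k j, fan v (Suc k) (Suc j)) \<in> octE n"
      by (simp add: octE_iff_cheb_dist)
  qed (use assms in auto)
  then show ?thesis by (cases v) (simp add: fan_def)
qed

lemma inj_fan: "inj (case_prod (fan v))"
  by (rule injI) (cases v, auto simp: fan_def outward_def split: if_splits)

lemma fan_neq: "0 < k \<Longrightarrow> fan v k j \<noteq> v"
  by (cases v) (auto simp: fan_def outward_def)

definition inv_octZ :: "nat \<Rightarrow> vtx \<Rightarrow> real" where
  "inv_octZ n u = (\<Sum>w\<in>octV n - {u}. 1 / (real (octd n u w))\<^sup>2)"

lemma octZ_eq: "octZ n u = inverse (inv_octZ n u)"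
  by (simp add: octZ_def inv_octZ_def)

lemma rot_image_octV_minus: "rot ` (octV n - {v}) = octV n - {rot v}"
proof
  show "octV n - {rot v} \<subseteq> rot ` (octV n - {v})"
  proof
    fix w assume "w \<in> octV n - {rot v}"
    then have "rot (rot w) \<in> octV n - {v}" by (metis Diff_iff rot_in_octV_iff rot_rot_rot singleton_iff)
    then show "w \<in> rot ` (octV n - {v})" by (metis image_eqI rot_rot_rot)
  qed
qed (simp add: image_subset_iff inj_eq[OF inj_rot])

lemma inv_octZ_rot: "inv_octZ n (rot v) = inv_octZ n v"
proof -
  have "inv_octZ n (rot v) = (\<Sum>w\<in>rot ` (octV n - {v}). 1 / (real (octd n (rot v) w))\<^sup>2)"
    by (simp add: inv_octZ_def rot_image_octV_minus)
  also have "\<dots> = inv_octZ n v"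
    by (simp add: inv_octZ_def sum.reindex inj_on_subset[OF inj_rot])
  finally show ?thesis .
qed

lemma sum_triangle_inverse_square:
  "(\<Sum>(k, j)\<in>Sigma {1..x} (\<lambda>k. {0..k}). 1 / (real k)\<^sup>2) = harm x + (\<Sum>k=1..x. 1 / (real k)\<^sup>2)"
proof -
  have "(\<Sum>(k, j)\<in>Sigma {1..x} (\<lambda>k. {0..k}). 1 / (real k)\<^sup>2) = (\<Sum>k=1..x. (real k + 1) / (real k)\<^sup>2)"
    by (subst sum.Sigma[symmetric]) (auto simp: field_simps)
  also have "\<dots> = (\<Sum>k=1..x. inverse (real k) + 1 / (real k)\<^sup>2)"
    by (intro sum.cong) (auto simp: field_simps power2_eq_square)
  finally show ?thesis by (simp add: sum.distrib harm_def)
qed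

lemma inv_octZ_ge_fan_sum:
  assumes v: "v \<in> octV n"
  shows "harm (nat \<bar>fst v\<bar>) + (\<Sum>k=1..nat \<bar>fst v\<bar>. 1 / (real k)\<^sup>2) \<le> inv_octZ n v"
proof -
  define I where "I = Sigma {1..nat \<bar>fst v\<bar>} (\<lambda>k. {0..k})"
  have fanV: "fan v k j \<in> octV n - {v}" and octd_fan: "0 < octd n v (fan v k j) \<and> octd n v (fan v k j) \<le> k"
    if "(k, j) \<in> I" for k j
  proof -
    from that have k: "0 < k" "int k \<le> \<bar>fst v\<bar>" "j \<le> k" by (auto simp: I_def)
    show "fan v k j \<in> octV n - {v}" using fan_in_octV[OF v k(2,3)] fan_neq[OF k(1)] by simp
    then show "0 < octd n v (fan v k j) \<and> octd n v (fan v k j) \<le> k"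
      using octd_pos[OF v, of "fan v k j"] octd_le[OF fan_relpow[OF v k(2,3)]] by force
  qed
  have "(\<Sum>(k, j)\<in>I. 1 / (real k)\<^sup>2) \<le> (\<Sum>(k, j)\<in>I. 1 / (real (octd n v (fan v k j)))\<^sup>2)"
    using octd_fan by (intro sum_mono) (fastforce intro!: divide_left_mono power_mono mult_pos_pos)
  also have "\<dots> = (\<Sum>w\<in>case_prod (fan v) ` I. 1 / (real (octd n v w))\<^sup>2)"
    by (subst sum.reindex[OF inj_on_subset[OF inj_fan subset_UNIV]]) (simp add: case_prod_unfold)
  also have "\<dots> \<le> inv_octZ n v"
    unfolding inv_octZ_def using fanV by (intro sum_mono2) (simp_all add: finite_octV image_subset_iff split_paired_all)
  finally show ?thesis unfolding I_def sum_triangle_inverse_square .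
qed

lemma ln_3_less: "ln (3::real) < 5 / 4"
proof -
  have "(37 / 32::real) ^ 8 \<le> exp (5 / 32) ^ 8"
    using exp_ge_add_one_self[of "5 / 32 :: real"] by (intro power_mono) auto
  also have "exp (5 / 32::real) ^ 8 = exp (5 / 4)"
    by (simp flip: exp_of_nat_mult)
  finally have "3 < exp (5 / 4::real)" by (simp add: power_divide)
  then show ?thesis by (metis exp_gt_zero ln_exp ln_less_cancel_iff zero_less_numeral)
qed

lemma ln_less_harm_plus_sum_inverse_squares:
  assumes "1 \<le> x" "n \<le> 3 * x"
  shows "ln (real n + 1) < harm x + (\<Sum>k=1..x. 1 / (real k)\<^sup>2)"
proof (cases "x = 1")
  case True
  then have "ln (real n + 1) \<le> ln 4" using assms by simp
  also have "ln (4::real) = 2 * ln 2" using ln_realpow[of 2 2] by simp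
  also have "\<dots> < 2" using ln_2_less_1 by simp
  finally show ?thesis using True by (simp add: harm_def)
next
  case False
  then have "(\<Sum>k\<in>{1, 2}. 1 / (real k)\<^sup>2) \<le> (\<Sum>k=1..x. 1 / (real k)\<^sup>2)"
    using assms(1) by (intro sum_mono2) auto
  then have "5 / 4 \<le> (\<Sum>k=1..x. 1 / (real k)\<^sup>2)" by simp
  moreover have "ln (real n + 1) \<le> ln (3 * (real x + 1))"
    using assms(2) by simp
  moreover have "ln (3 * (real x + 1)) = ln 3 + ln (real x + 1)"
    by (subst ln_mult) auto
  ultimately show ?thesis using ln_3_less ln_le_harm[of x] by linarith
qed

lemma inv_octZ_gt_ln:
  assumes "1 \<le> n" "v \<in> octV n"
  shows "ln (real n + 1) < inv_octZ n v"
proof -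
  obtain a b c where v: "v = (a, b, c)" by (metis prod.exhaust)
  have abc: "\<bar>a\<bar> + \<bar>b\<bar> + \<bar>c\<bar> = int n" using assms(2) v by (simp add: octV_def)
  have "\<exists>w \<in> {v, rot v, rot (rot v)}. int n \<le> 3 * \<bar>fst w\<bar>"
    using abc by (simp add: v) linarith
  then obtain w where "w \<in> {v, rot v, rot (rot v)}" "int n \<le> 3 * \<bar>fst w\<bar>"
    by blast
  then have w: "w \<in> octV n" "inv_octZ n w = inv_octZ n v" "n \<le> 3 * nat \<bar>fst w\<bar>"
    using assms(2) inv_octZ_rot[of n v] inv_octZ_rot[of n "rot v"] by auto
  then have "ln (real n + 1) < harm (nat \<bar>fst w\<bar>) + (\<Sum>k=1..nat \<bar>fst w\<bar>. 1 / (real k)\<^sup>2)"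
    using assms(1) by (intro ln_less_harm_plus_sum_inverse_squares) auto
  with inv_octZ_ge_fan_sum[OF w(1)] w(2) show ?thesis by linarith
qed

lemma octZ_pos_le:
  assumes "1 \<le> n" "v \<in> octV n"
  shows "0 < octZ n v \<and> octZ n v \<le> 1 / ln (real n + 1)"
proof -
  have L: "0 < ln (real n + 1)" using assms(1) by simp
  with inv_octZ_gt_ln[OF assms] have "0 < inv_octZ n v" by linarith
  with inv_octZ_gt_ln[OF assms] L show ?thesis
    by (simp add: octZ_eq inverse_eq_divide frac_le)
qed

section \<open>Reduction to pairs of long-range choices\<close>

lemma pmf_choice_pmf:
  assumes "1 \<le> n" "u \<in> octV n"
  shows "pmf (choice_pmf n u) v = (if v \<in> octV n - {u} then octZ n u / (real (octd n u v))\<^sup>2 else 0)"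
proof -
  define p where "p = (\<lambda>v. if v \<in> octV n - {u} then octZ n u / (real (octd n u v))\<^sup>2 else 0)"
  have p_nonneg: "0 \<le> p v" for v
    using octZ_pos_le[OF assms] by (simp add: p_def)
  have "(\<Sum>v\<in>octV n - {u}. p v) = octZ n u * inv_octZ n u"
    by (simp add: p_def inv_octZ_def sum_distrib_left)
  also have "\<dots> = 1"
    using octZ_pos_le[OF assms] by (simp add: octZ_eq)
  moreover have "(\<integral>\<^sup>+v. ennreal (p v) \<partial>count_space UNIV) = (\<Sum>v\<in>octV n - {u}. ennreal (p v))"
    by (rule nn_integral_count_space') (auto simp: p_def finite_octV)
  ultimately have "(\<integral>\<^sup>+v. ennreal (p v) \<partial>count_space UNIV) = 1"
    using p_nonneg by (simp add: sum_ennreal)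
  then show ?thesis
    unfolding choice_pmf_def p_def[symmetric] using p_nonneg by (subst pmf_embed_pmf) (auto simp: p_def)
qed

lemma pmf_choice_pmf_le:
  assumes "1 \<le> n" "u \<in> octV n" "v \<in> octV n" "v \<noteq> u"
  shows "pmf (choice_pmf n u) v \<le> 1 / (ln (real n + 1) * (real (cheb_dist u v))\<^sup>2)"
proof -
  have "0 < cheb_dist u v" using assms(4) by (metis cheb_dist_eq_0_iff neq0_conv)
  then have "1 / (real (octd n u v))\<^sup>2 \<le> 1 / (real (cheb_dist u v))\<^sup>2"
    using cheb_dist_le_octd[OF assms(2,3)] by (intro divide_left_mono power_mono mult_pos_pos zero_less_power) auto
  with octZ_pos_le[OF assms(1,2)] have "octZ n u * (1 / (real (octd n u v))\<^sup>2)
      \<le> 1 / ln (real n + 1) * (1 / (real (cheb_dist u v))\<^sup>2)"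
    by (intro mult_mono) auto
  then show ?thesis using assms by (simp add: pmf_choice_pmf)
qed

lemma prob_choices_pmf_pair:
  assumes "u \<in> octV n" "v \<in> octV n" "u \<noteq> v"
  shows "measure_pmf.prob (choices_pmf n) {f. f u = x \<and> f v = y}
        = pmf (choice_pmf n u) x * pmf (choice_pmf n v) y"
proof -
  define B where "B = (\<lambda>w. if w = u then {x} else if w = v then {y} else UNIV)"
  have "{f. f u = x \<and> f v = y} = Pi (octV n) B"
  proof (intro equalityI subsetI)
    fix f assume "f \<in> Pi (octV n) B"
    then have "f u \<in> B u" "f v \<in> B v" using assms(1,2) by blast+
    then show "f \<in> {f. f u = x \<and> f v = y}" using assms(3) by (simp add: B_def)
  qed (simp add: B_def)
  then have "measure_pmf.prob (choices_pmf n) {f. f u = x \<and> f v = y}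
      = (\<Prod>w\<in>octV n. measure_pmf.prob (choice_pmf n w) (B w))"
    by (simp add: choices_pmf_def measure_Pi_pmf_Pi finite_octV)
  also have "\<dots> = (\<Prod>w\<in>octV n. (if w = u then pmf (choice_pmf n u) x else 1)
                                * (if w = v then pmf (choice_pmf n v) y else 1))"
    using assms(3) by (intro prod.cong) (auto simp: B_def measure_pmf_single)
  also have "\<dots> = pmf (choice_pmf n u) x * pmf (choice_pmf n v) y"
    using assms by (simp add: prod.distrib finite_octV)
  finally show ?thesis .
qed

definition far_edges :: "nat \<Rightarrow> vtx \<Rightarrow> (vtx \<times> vtx) set" where
  "far_edges n u = {(a, b) \<in> octE n. 2 \<le> cheb_dist u a \<and> 2 \<le> cheb_dist u b}"

lemma finite_far_edges: "finite (far_edges n u)"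
  by (rule finite_subset[OF _ finite_octE]) (auto simp: far_edges_def)

lemma swap_far_edges: "prod.swap ` far_edges n u = far_edges n u"
  by (auto simp: far_edges_def image_iff intro: octE_sym)

text \<open>The long-range endpoints lie at graph distance at least 2 from \<open>u\<close>, so they are not
  adjacent to \<open>u\<close>, i.e. at Chebyshev distance at least 2.\<close>
lemma E5_subset_far_edges:
  assumes "u \<in> octV n"
  shows "E5 n u \<subseteq> (\<Union>(a, b)\<in>far_edges n u. {f. f u = a \<and> f b = u})"
proof
  fix f assume "f \<in> E5 n u"
  then obtain a b where ab: "u \<noteq> a" "b \<noteq> u" "2 \<le> octd n u a" "f u = a"
     "{a, b} \<in> {{v, w} | v w. (v, w) \<in> octE n}" "2 \<le> octd n b u" "f b = u"
    unfolding E5_def by blast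
  have E: "(a, b) \<in> octE n"
    using ab(5) octE_sym by (auto simp: doubleton_eq_iff)
  have far: "2 \<le> cheb_dist v w" if "v \<in> octV n" "w \<in> octV n" "v \<noteq> w" "2 \<le> octd n v w" for v w
  proof (rule ccontr)
    assume "\<not> 2 \<le> cheb_dist v w"
    with that have "(v, w) \<in> octE n ^^ 1"
      by (auto simp: octE_iff_cheb_dist)
    with that(4) show False using octd_le by fastforce
  qed
  have "2 \<le> cheb_dist u a" "2 \<le> cheb_dist u b"
    using far[of u a] far[of b u] ab(1,2,3,6) assms octE_imp_octV[OF E] cheb_dist_commute[of b u] by auto
  with E ab(4,7) show "f \<in> (\<Union>(a, b)\<in>far_edges n u. {f. f u = a \<and> f b = u})"
    unfolding far_edges_def by blast
qed

lemma prob_E5_le: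
  assumes "1 \<le> n" "u \<in> octV n"
  shows "measure_pmf.prob (choices_pmf n) (E5 n u)
    \<le> (\<Sum>(a, b)\<in>far_edges n u. 1 / ((real (cheb_dist u a))\<^sup>2 * (real (cheb_dist u b))\<^sup>2))
        / (ln (real n + 1))\<^sup>2"
proof -
  let ?P = "measure_pmf.prob (choices_pmf n)"
  define L where "L = ln (real n + 1)"
  have "?P (E5 n u) \<le> ?P (\<Union>(a, b)\<in>far_edges n u. {f. f u = a \<and> f b = u})"
    by (rule measure_pmf.finite_measure_mono[OF E5_subset_far_edges[OF assms(2)]]) simp
  also have "\<dots> \<le> (\<Sum>(a, b)\<in>far_edges n u. ?P {f. f u = a \<and> f b = u})"
    using measure_pmf.finite_measure_subadditive_finite[OF finite_far_edges,
        of "\<lambda>(a, b). {f. f u = a \<and> f b = u}" n u]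
    by (simp add: case_prod_unfold)
  also have "\<dots> \<le> (\<Sum>(a, b)\<in>far_edges n u.
      1 / ((real (cheb_dist u a))\<^sup>2 * (real (cheb_dist u b))\<^sup>2) / L\<^sup>2)"
  proof (intro sum_mono, clarify)
    fix a b assume ab: "(a, b) \<in> far_edges n u"
    then have ab': "a \<in> octV n" "b \<in> octV n" "a \<noteq> u" "b \<noteq> u"
      by (auto simp: far_edges_def dest: octE_imp_octV)
    then have "?P {f. f u = a \<and> f b = u} = pmf (choice_pmf n u) a * pmf (choice_pmf n b) u"
      using assms(2) by (intro prob_choices_pmf_pair) auto
    also have "\<dots> \<le> 1 / (L * (real (cheb_dist u a))\<^sup>2) * (1 / (L * (real (cheb_dist b u))\<^sup>2))"
      using ab' assms unfolding L_def by (intro mult_mono pmf_choice_pmf_le) auto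
    also have "\<dots> = 1 / ((real (cheb_dist u a))\<^sup>2 * (real (cheb_dist u b))\<^sup>2) / L\<^sup>2"
      by (simp add: cheb_dist_commute[of b u] power2_eq_square mult_ac)
    finally show "?P {f. f u = a \<and> f b = u}
        \<le> 1 / ((real (cheb_dist u a))\<^sup>2 * (real (cheb_dist u b))\<^sup>2) / L\<^sup>2" .
  qed
  finally show ?thesis
    by (simp add: L_def sum_divide_distrib split_def)
qed

section \<open>Summing over the far edges\<close>

lemma sum_mult_le_sum_square_swap:
  fixes g :: "'a \<Rightarrow> real"
  assumes "prod.swap ` R = R"
  shows "(\<Sum>(a, b)\<in>R. g a * g b) \<le> (\<Sum>(a, b)\<in>R. (g a)\<^sup>2)"
  unfolding split_def
proof -
  have "(\<Sum>p\<in>R. (g (snd p))\<^sup>2) = (\<Sum>p\<in>prod.swap ` R. (g (fst p))\<^sup>2)"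
    by (simp add: sum.reindex)
  then have swap: "(\<Sum>p\<in>R. (g (snd p))\<^sup>2) = (\<Sum>p\<in>R. (g (fst p))\<^sup>2)"
    by (simp add: assms)
  have "(\<Sum>p\<in>R. g (fst p) * g (snd p)) \<le> (\<Sum>p\<in>R. ((g (fst p))\<^sup>2 + (g (snd p))\<^sup>2) / 2)"
  proof (rule sum_mono)
    fix p
    have "0 \<le> (g (fst p) - g (snd p))\<^sup>2" by simp
    then show "g (fst p) * g (snd p) \<le> ((g (fst p))\<^sup>2 + (g (snd p))\<^sup>2) / 2"
      by (simp add: power2_diff)
  qed
  also have "\<dots> = (\<Sum>p\<in>R. (g (fst p))\<^sup>2)"
    by (simp add: sum.distrib swap flip: sum_divide_distrib)
  finally show "(\<Sum>p\<in>R. g (fst p) * g (snd p)) \<le> (\<Sum>p\<in>R. (g (fst p))\<^sup>2)" .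
qed

definition abs_gain :: "int \<Rightarrow> int \<Rightarrow> int" where
  "abs_gain s d = (if s > 0 then d else if s < 0 then - d else \<bar>d\<bar>)"

lemma abs_add_unit: "d \<in> {-1, 0, 1} \<Longrightarrow> \<bar>t + d\<bar> - \<bar>t\<bar> = abs_gain (sgn t) d"
  by (auto simp: abs_gain_def sgn_if abs_if)

definition unit_steps :: "(int \<times> int \<times> int) list" where
  "unit_steps = [(d1, d2, d3). d1 \<leftarrow> [-1, 0, 1], d2 \<leftarrow> [-1, 0, 1], d3 \<leftarrow> [-1, 0, 1],
      (d1, d2, d3) \<noteq> (0, 0, 0)]"

lemma unit_steps_eq: "unit_steps =
  [(-1,-1,-1), (-1,-1,0), (-1,-1,1), (-1,0,-1), (-1,0,0), (-1,0,1), (-1,1,-1), (-1,1,0), (-1,1,1),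
   (0,-1,-1), (0,-1,0), (0,-1,1), (0,0,-1), (0,0,1), (0,1,-1), (0,1,0), (0,1,1),
   (1,-1,-1), (1,-1,0), (1,-1,1), (1,0,-1), (1,0,0), (1,0,1), (1,1,-1), (1,1,0), (1,1,1)]"
  by (simp add: unit_steps_def)

lemma in_set_unit_steps:
  "d1 \<in> {-1, 0, 1} \<Longrightarrow> d2 \<in> {-1, 0, 1} \<Longrightarrow> d3 \<in> {-1, 0, 1} \<Longrightarrow> (d1, d2, d3) \<noteq> (0, 0, 0)
    \<Longrightarrow> (d1, d2, d3) \<in> set unit_steps"
  unfolding unit_steps_eq by (simp only: insert_iff empty_iff) (elim disjE; simp)

lemma length_filter_unit_steps:
  "s1 \<in> {-1, 0, 1} \<Longrightarrow> s2 \<in> {-1, 0, 1} \<Longrightarrow> s3 \<in> {-1, 0, 1} \<Longrightarrow>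
    length (filter (\<lambda>(d1, d2, d3). abs_gain s1 d1 + abs_gain s2 d2 + abs_gain s3 d3 = 0) unit_steps) \<le> 6"
  unfolding unit_steps_eq by (elim insertE emptyE; simp add: abs_gain_def)

text \<open>A neighbour of \<open>v\<close> is \<open>v + d\<close> for a unit step \<open>d\<close> that keeps \<open>\<bar>x\<bar> + \<bar>y\<bar> + \<bar>z\<bar>\<close>
  constant; whether it does depends only on \<open>d\<close> and the signs of the coordinates of \<open>v\<close>.\<close>
lemma card_octE_neighbours: "card {w. (v, w) \<in> octE n} \<le> 6"
proof -
  obtain x y z where v: "v = (x, y, z)" by (metis prod.exhaust)
  define P where "P = (\<lambda>(d1, d2, d3). abs_gain (sgn x) d1 + abs_gain (sgn y) d2 + abs_gain (sgn z) d3 = 0)"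
  define shift where "shift = (\<lambda>(d1, d2, d3). (x + d1, y + d2, z + d3))"
  have "w \<in> shift ` set (filter P unit_steps)" if E: "(v, w) \<in> octE n" for w
  proof -
    obtain x' y' z' where w: "w = (x', y', z')" by (metis prod.exhaust)
    have "\<bar>x - x'\<bar> \<le> 1" "\<bar>y - y'\<bar> \<le> 1" "\<bar>z - z'\<bar> \<le> 1" "w \<noteq> v"
      using E unfolding octE_iff_cheb_dist v w cheb_dist_le_iff by auto
    then have d: "x' - x \<in> {-1, 0, 1}" "y' - y \<in> {-1, 0, 1}" "z' - z \<in> {-1, 0, 1}"
      and nz: "(x' - x, y' - y, z' - z) \<noteq> (0, 0, 0)"
      by (auto simp: v w)
    have "\<bar>x'\<bar> + \<bar>y'\<bar> + \<bar>z'\<bar> = \<bar>x\<bar> + \<bar>y\<bar> + \<bar>z\<bar>"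
      using octE_imp_octV[OF E] by (simp add: v w octV_def)
    then have "P (x' - x, y' - y, z' - z)"
      using abs_add_unit[OF d(1), of x] abs_add_unit[OF d(2), of y] abs_add_unit[OF d(3), of z]
      by (simp add: P_def)
    moreover have "(x' - x, y' - y, z' - z) \<in> set unit_steps"
      using in_set_unit_steps[OF d nz] .
    moreover have "w = shift (x' - x, y' - y, z' - z)"
      by (simp add: shift_def w)
    ultimately show ?thesis by force
  qed
  then have "card {w. (v, w) \<in> octE n} \<le> card (shift ` set (filter P unit_steps))"
    by (intro card_mono) auto
  also have "\<dots> \<le> length (filter P unit_steps)"
    using card_image_le card_length le_trans by blast
  also have "\<dots> \<le> 6"
    unfolding P_def by (rule length_filter_unit_steps) (auto simp: sgn_if)
  finally show ?thesis .
qed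

lemma sum_far_edges_le:
  fixes h :: "vtx \<Rightarrow> real"
  assumes "\<And>a. 0 \<le> h a"
  shows "(\<Sum>(a, b)\<in>far_edges n u. h a) \<le> 6 * (\<Sum>a\<in>{a \<in> octV n. 2 \<le> cheb_dist u a}. h a)"
proof -
  define A where "A = {a \<in> octV n. 2 \<le> cheb_dist u a}"
  define N where "N = (\<lambda>a. {b. (a, b) \<in> octE n})"
  have fin: "finite A" "finite (N a)" for a
    using finite_subset[OF _ finite_octE, of "{a} \<times> N a"]
    by (auto simp: A_def N_def finite_octV intro: finite_cartesian_productD2)
  have "far_edges n u \<subseteq> Sigma A N"
    by (auto simp: far_edges_def A_def N_def dest: octE_imp_octV)
  then have "(\<Sum>(a, b)\<in>far_edges n u. h a) \<le> (\<Sum>(a, b)\<in>Sigma A N. h a)"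
    using fin assms by (intro sum_mono2) auto
  also have "\<dots> = (\<Sum>a\<in>A. real (card (N a)) * h a)"
    using fin by (simp add: sum.Sigma[symmetric])
  also have "\<dots> \<le> (\<Sum>a\<in>A. 6 * h a)"
    using card_octE_neighbours assms by (intro sum_mono mult_right_mono) (auto simp: N_def)
  finally show ?thesis by (simp add: A_def sum_distrib_left)
qed

lemma outward_mult_abs: "outward t * \<bar>t\<bar> = t"
  by (simp add: outward_def)

lemma outward_cases: "outward t \<in> {-1, 1}"
  by (simp add: outward_def)

definition slab :: "nat \<Rightarrow> nat \<Rightarrow> int \<Rightarrow> int \<Rightarrow> vtx set" where
  "slab n m p q = {(x, y, z). (x, y, z) \<in> octV n \<and> \<bar>x - p\<bar> = int m \<and> \<bar>y - q\<bar> \<le> int m}"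

lemma finite_slab: "finite (slab n m p q)"
  by (rule finite_subset[OF _ finite_octV]) (auto simp: slab_def)

text \<open>On \<open>octV n\<close> the third coordinate is determined up to sign by the first two.\<close>
lemma card_slab: "card (slab n m p q) \<le> 4 * (2 * m + 1)"
proof -
  define S where "S = {-1, 1::int} \<times> {- int m..int m} \<times> {-1, 1::int}"
  define f where "f = (\<lambda>(s, t, r). (p + s * int m, q + t, r * (int n - \<bar>p + s * int m\<bar> - \<bar>q + t\<bar>)))"
  have "slab n m p q \<subseteq> f ` S"
  proof (clarsimp simp: slab_def)
    fix x y z assume v: "(x, y, z) \<in> octV n" "\<bar>x - p\<bar> = int m" "\<bar>y - q\<bar> \<le> int m"
    have "\<bar>z\<bar> = int n - \<bar>x\<bar> - \<bar>y\<bar>" using v(1) by (simp add: octV_def)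
    then have "x = p + outward (x - p) * int m" "z = outward z * (int n - \<bar>x\<bar> - \<bar>y\<bar>)"
      using v(2) outward_mult_abs[of "x - p"] outward_mult_abs[of z] by simp_all
    moreover have "(outward (x - p), y - q, outward z) \<in> S"
      using v(3) outward_cases by (auto simp: S_def abs_le_iff)
    ultimately show "(x, y, z) \<in> f ` S"
      by (intro image_eqI[of _ _ "(outward (x - p), y - q, outward z)"]) (auto simp: f_def)
  qed
  then have "card (slab n m p q) \<le> card (f ` S)"
    by (rule card_mono[rotated]) (simp add: S_def)
  also have "\<dots> \<le> card S"
    by (rule card_image_le) (simp add: S_def)
  finally show ?thesis by (simp add: S_def card_cartesian_product)
qed

lemma cheb_sphere_subset_slabs:
  "{v \<in> octV n. cheb_dist (p, q, r) v = m}
    \<subseteq> slab n m p q \<union> rot ` rot ` slab n m q r \<union> rot ` slab n m r p"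
proof
  fix v assume "v \<in> {v \<in> octV n. cheb_dist (p, q, r) v = m}"
  moreover obtain x y z where xyz: "v = (x, y, z)" by (metis prod.exhaust)
  ultimately have v: "(x, y, z) \<in> octV n" "m = cheb_dist (p, q, r) (x, y, z)" by auto
  have yzx: "(y, z, x) \<in> octV n" "(z, x, y) \<in> octV n"
    using v(1) rot_in_octV_iff[of "(x, y, z)" n] rot_in_octV_iff[of "(y, z, x)" n] by simp_all
  from v(2) have "max \<bar>p - x\<bar> (max \<bar>q - y\<bar> \<bar>r - z\<bar>) = int m" by simp
  then consider "\<bar>p - x\<bar> = int m" "\<bar>q - y\<bar> \<le> int m" | "\<bar>q - y\<bar> = int m" "\<bar>r - z\<bar> \<le> int m"
    | "\<bar>r - z\<bar> = int m" "\<bar>p - x\<bar> \<le> int m"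
    by linarith
  then show "v \<in> slab n m p q \<union> rot ` rot ` slab n m q r \<union> rot ` slab n m r p"
  proof cases
    case 1
    then show ?thesis using v(1) by (simp add: xyz slab_def abs_minus_commute)
  next
    case 2
    then have "(y, z, x) \<in> slab n m q r" using yzx by (simp add: slab_def abs_minus_commute)
    then have "rot (rot (y, z, x)) \<in> rot ` rot ` slab n m q r" by (intro imageI)
    then show ?thesis by (simp add: xyz)
  next
    case 3
    then have "(z, x, y) \<in> slab n m r p" using yzx by (simp add: slab_def abs_minus_commute)
    then have "rot (z, x, y) \<in> rot ` slab n m r p" by (intro imageI)
    then show ?thesis by (simp add: xyz)
  qed
qed

lemma card_rot_image [simp]: "card (rot ` X) = card X"
  by (rule card_image) (rule inj_on_subset[OF inj_rot subset_UNIV])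

lemma card_cheb_sphere: "card {v \<in> octV n. cheb_dist u v = m} \<le> 12 * (2 * m + 1)"
proof -
  obtain p q r where u: "u = (p, q, r)" by (metis prod.exhaust)
  have "card {v \<in> octV n. cheb_dist u v = m}
      \<le> card (slab n m p q \<union> rot ` rot ` slab n m q r \<union> rot ` slab n m r p)"
    unfolding u by (intro card_mono cheb_sphere_subset_slabs) (simp add: finite_slab)
  also have "\<dots> \<le> card (slab n m p q) + card (slab n m q r) + card (slab n m r p)"
    using card_Un_le[of "slab n m p q \<union> rot ` rot ` slab n m q r" "rot ` slab n m r p"]
      card_Un_le[of "slab n m p q" "rot ` rot ` slab n m q r"] by simp
  also have "\<dots> \<le> 12 * (2 * m + 1)"
    using card_slab[of n m p q] card_slab[of n m q r] card_slab[of n m r p] by linarith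
  finally show ?thesis .
qed

lemma sum_far_vertices_le:
  assumes "u \<in> octV n"
  shows "(\<Sum>a\<in>{a \<in> octV n. 2 \<le> cheb_dist u a}. 1 / (real (cheb_dist u a)) ^ 4)
    \<le> 30 * (\<Sum>m=2..2 * n. 1 / (real m) ^ 3)"
proof -
  define A where "A = {a \<in> octV n. 2 \<le> cheb_dist u a}"
  have "cheb_dist u ` A \<subseteq> {2..2 * n}"
    using cheb_dist_octV_le[OF assms] by (auto simp: A_def)
  then have "(\<Sum>a\<in>A. 1 / (real (cheb_dist u a)) ^ 4)
      = (\<Sum>m=2..2 * n. \<Sum>a\<in>{a \<in> A. cheb_dist u a = m}. 1 / (real (cheb_dist u a)) ^ 4)"
    by (intro sum.group[symmetric]) (auto simp: A_def finite_octV)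
  also have "\<dots> = (\<Sum>m=2..2 * n. real (card {a \<in> A. cheb_dist u a = m}) / (real m) ^ 4)"
    by (intro sum.cong) auto
  also have "\<dots> \<le> (\<Sum>m=2..2 * n. 30 * (1 / (real m) ^ 3))"
  proof (rule sum_mono)
    fix m :: nat assume m: "m \<in> {2..2 * n}"
    have "card {a \<in> A. cheb_dist u a = m} \<le> card {a \<in> octV n. cheb_dist u a = m}"
      by (rule card_mono) (auto simp: A_def finite_octV)
    also have "\<dots> \<le> 12 * (2 * m + 1)" by (rule card_cheb_sphere)
    also have "\<dots> \<le> 30 * m" using m by simp
    finally have "real (card {a \<in> A. cheb_dist u a = m}) / (real m) ^ 4 \<le> 30 * real m / (real m) ^ 4"
      by (intro divide_right_mono) auto
    also have "\<dots> = 30 * (1 / (real m) ^ 3)"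
      using m by (simp add: power_eq_if)
    finally show "real (card {a \<in> A. cheb_dist u a = m}) / (real m) ^ 4 \<le> 30 * (1 / (real m) ^ 3)" .
  qed
  finally show ?thesis by (simp add: A_def sum_distrib_left)
qed

text \<open>The bound \<open>1/4\<close> comes from the telescoping estimate \<open>1/(k+1)\<^sup>3 \<le> 1/(2k(k+1)) - 1/(2(k+1)(k+2))\<close>.\<close>
lemma sum_inverse_cubes_le:
  "1 \<le> N \<Longrightarrow> (\<Sum>m=2..N. 1 / (real m) ^ 3) + 1 / (2 * real N * (real N + 1)) \<le> 1 / 4"
proof (induction N rule: nat_induct_at_least)
  case (Suc N)
  define x where "x = real N"
  have x: "1 \<le> x" using Suc.hyps by (simp add: x_def)
  have "x * (x + 1) * (x + 2) \<le> (x + 1) ^ 3" using x by (simp add: power3_eq_cube algebra_simps)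
  then have "1 / (x + 1) ^ 3 \<le> 1 / (x * (x + 1) * (x + 2))"
    by (intro divide_left_mono) (use x in auto)
  also have "\<dots> = 1 / (2 * x * (x + 1)) - 1 / (2 * (x + 1) * (x + 2))"
    using x by (simp add: divide_simps) (simp add: algebra_simps)
  finally have "1 / (x + 1) ^ 3 + 1 / (2 * (x + 1) * (x + 2)) \<le> 1 / (2 * x * (x + 1))"
    by simp
  then show ?case
    using Suc.IH Suc.hyps by (simp add: x_def algebra_simps)
qed simp

lemma sum_inverse_cubes_less: "(\<Sum>m=2..N. 1 / (real m) ^ 3) < 1 / 4"
proof (cases "N = 0")
  case False
  have "0 < 1 / (2 * real N * (real N + 1))" using False by simp
  with sum_inverse_cubes_le[of N] False show ?thesis by linarith
qed simp

lemma sum_inverse_cubes_le_zeta_3: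
  assumes "1 \<le> N"
  shows "1 + (\<Sum>m=2..N. 1 / (real m) ^ 3) \<le> (\<Sum>i. 1 / (real (Suc i)) ^ 3)"
proof -
  have "summable (\<lambda>i. inverse (real i ^ 3))"
    by (rule inverse_power_summable) simp
  then have "summable (\<lambda>i. 1 / (real (Suc i)) ^ 3)"
    by (subst summable_Suc_iff) (simp add: inverse_eq_divide)
  then have "(\<Sum>i<N. 1 / (real (Suc i)) ^ 3) \<le> (\<Sum>i. 1 / (real (Suc i)) ^ 3)"
    by (rule sum_le_suminf) auto
  moreover have "(\<Sum>i<N. 1 / (real (Suc i)) ^ 3) = (\<Sum>m=1..N. 1 / (real m) ^ 3)"
    by (rule sum_bounds_lt_plus1)
  moreover have "\<dots> = 1 + (\<Sum>m=2..N. 1 / (real m) ^ 3)"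
    using assms by (subst sum.atLeast_Suc_atMost) (auto simp: numeral_2_eq_2)
  ultimately show ?thesis by simp
qed

lemma sum_far_edges_inverse_squares_le:
  assumes "u \<in> octV n"
  shows "(\<Sum>(a, b)\<in>far_edges n u. 1 / ((real (cheb_dist u a))\<^sup>2 * (real (cheb_dist u b))\<^sup>2))
    \<le> 180 * (\<Sum>m=2..2 * n. 1 / (real m) ^ 3)"
proof -
  define g where "g = (\<lambda>a. 1 / (real (cheb_dist u a))\<^sup>2)"
  have "(\<Sum>(a, b)\<in>far_edges n u. 1 / ((real (cheb_dist u a))\<^sup>2 * (real (cheb_dist u b))\<^sup>2))
      = (\<Sum>(a, b)\<in>far_edges n u. g a * g b)"
    by (simp add: g_def)
  also have "\<dots> \<le> (\<Sum>(a, b)\<in>far_edges n u. (g a)\<^sup>2)"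
    by (rule sum_mult_le_sum_square_swap[OF swap_far_edges])
  also have "\<dots> \<le> 6 * (\<Sum>a\<in>{a \<in> octV n. 2 \<le> cheb_dist u a}. (g a)\<^sup>2)"
    by (rule sum_far_edges_le) simp
  also have "(\<Sum>a\<in>{a \<in> octV n. 2 \<le> cheb_dist u a}. (g a)\<^sup>2)
      = (\<Sum>a\<in>{a \<in> octV n. 2 \<le> cheb_dist u a}. 1 / (real (cheb_dist u a)) ^ 4)"
    by (simp add: g_def power_one_over flip: power_mult)
  finally show ?thesis
    using sum_far_vertices_le[OF assms] by linarith
qed

theorem lemma9:
  fixes n :: nat and u :: vtx
  assumes "n \<ge> 1" and "u \<in> octV n"
  shows "measure_pmf.prob (choices_pmf n) (E5 n u)
           < 36 * (\<Sum>i. 1 / (real (Suc i)) ^ 3) / (ln (real n + 1))\<^sup>2"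
proof -
  define T where "T = (\<Sum>m=2..2 * n. 1 / (real m) ^ 3)"
  have "0 < ln (real n + 1)" using assms(1) by simp
  have "180 * T < 36 * (1 + T)"
    using sum_inverse_cubes_less[of "2 * n"] by (simp add: T_def)
  also have "\<dots> \<le> 36 * (\<Sum>i. 1 / (real (Suc i)) ^ 3)"
    using sum_inverse_cubes_le_zeta_3[of "2 * n"] assms(1) by (simp add: T_def)
  finally have "180 * T / (ln (real n + 1))\<^sup>2 < 36 * (\<Sum>i. 1 / (real (Suc i)) ^ 3) / (ln (real n + 1))\<^sup>2"
    using \<open>0 < ln (real n + 1)\<close> by (simp add: divide_strict_right_mono)
  moreover have "measure_pmf.prob (choices_pmf n) (E5 n u) \<le> 180 * T / (ln (real n + 1))\<^sup>2"
    using prob_E5_le[OF assms] sum_far_edges_inverse_squares_le[OF assms(2)]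
    by (smt (verit) T_def divide_right_mono zero_le_power2)
  ultimately show ?thesis by linarith
qed

end
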